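(* Let $f:2^{\mathcal N}\to\mathbb R_{\ge0}$ be non-negative submodular and $\mathcal M=(\mathcal N,\mathcal I)$ a matroid of rank $k$, padded with dummy elements as described in the context. Consider the Smooth Residual Random Greedy algorithm (general matroid) with parameter $T$: $S_0=\emptyset$; for $i=1,\dots,T$, let $M_i$ be a base of $\mathcal M/S_{i-1}$ maximizing $\sum_{u\in M_i}[f(S_{i-1}\cup\{u\})-f(S_{i-1})]$; with probability $1-|S_{i-1}|/k$ let $u_i$ be a uniformly random element of $M_i$ and set $S_i=S_{i-1}\cup\{u_i\}$; otherwise set $S_i=S_{i-1}$. Then for every $i=1,\dots,T$, $$\mathbb E[f(O_{S_i}\cup S_i)]\ge\Big(1-\frac2k\Big)\mathbb E[f(O_{S_{i-1}}\cup S_{i-1})]+\frac1k\,\mathbb E[f(S_{i-1})].$$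
   Context: A set function $f$ is submodular if $f(A\cup B)+f(A\cap B)\le f(A)+f(B)$ for all $A,B\subseteq\mathcal N$. For $S\in\mathcal I$, the contracted matroid $\mathcal M/S$ has ground set $\mathcal N\setminus S$, with $S'\subseteq\mathcal N\setminus S$ independent iff $S'\cup S\in\mathcal I$. Padding assumption: the ground set contains zero-contribution dummy elements (e.g., a parallel copy $u'$ of every original element $u$, a set being independent iff it contains at most one of $u,u'$ for each $u$ and its projection onto the original elements is independent, and $f$ depending only on the original elements of a set), so that for every $S\in\mathcal I$ one may fix $O_S$ to be a set $A$ maximizing $f(S\cup A)$ over independent sets $A$ of $\mathcal M/S$ which is moreover a base of $\mathcal M/S$ (so $S\cup O_S$ is a base of $\mathcal M$ and $|O_S|=k-|S|$). *)

theory Defs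
  imports "HOL-Probability.Probability"
begin

definition matroid :: "'a set \<Rightarrow> ('a set \<Rightarrow> bool) \<Rightarrow> bool" where
  "matroid N indep \<longleftrightarrow>
     finite N \<and> indep {} \<and> (\<forall>A. indep A \<longrightarrow> A \<subseteq> N) \<and>
     (\<forall>A B. indep B \<and> A \<subseteq> B \<longrightarrow> indep A) \<and>
     (\<forall>A B. indep A \<and> indep B \<and> card A < card B \<longrightarrow> (\<exists>x\<in>B - A. indep (insert x A)))"

definition matroid_rank :: "('a set \<Rightarrow> bool) \<Rightarrow> nat" where
  "matroid_rank indep = Max (card ` {A. indep A})"

definition contract_indep :: "'a set \<Rightarrow> ('a set \<Rightarrow> bool) \<Rightarrow> 'a set \<Rightarrow> 'a set \<Rightarrow> bool" where
  "contract_indep N indep S A \<longleftrightarrow> A \<subseteq> N - S \<and> indep (A \<union> S)"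

definition is_base :: "('a set \<Rightarrow> bool) \<Rightarrow> 'a set \<Rightarrow> bool" where
  "is_base indep B \<longleftrightarrow> indep B \<and> (\<forall>A. indep A \<and> B \<subseteq> A \<longrightarrow> A = B)"

definition submodular_on :: "'a set \<Rightarrow> ('a set \<Rightarrow> real) \<Rightarrow> bool" where
  "submodular_on N f \<longleftrightarrow>
     (\<forall>A B. A \<subseteq> N \<and> B \<subseteq> N \<longrightarrow> f (A \<union> B) + f (A \<inter> B) \<le> f A + f B)"

text \<open>One iteration (number i) of Smooth Residual Random Greedy from current set S;
  Mc i S is the base M_i of M/S chosen in iteration i.\<close>
definition srrg_step ::
  "nat \<Rightarrow> (nat \<Rightarrow> 'a set \<Rightarrow> 'a set) \<Rightarrow> nat \<Rightarrow> 'a set \<Rightarrow> 'a set pmf" where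
  "srrg_step k Mc i S =
     bind_pmf (bernoulli_pmf (1 - real (card S) / real k))
       (\<lambda>b. if b then map_pmf (\<lambda>u. insert u S) (pmf_of_set (Mc i S)) else return_pmf S)"

fun srrg_dist :: "nat \<Rightarrow> (nat \<Rightarrow> 'a set \<Rightarrow> 'a set) \<Rightarrow> nat \<Rightarrow> 'a set pmf" where
  "srrg_dist k Mc 0 = return_pmf {}"
| "srrg_dist k Mc (Suc i) = bind_pmf (srrg_dist k Mc i) (srrg_step k Mc (Suc i))"

end

theory Submission
  imports Defs
begin

(* Fix S = S_(i-1) and let A = S + O_S. By Hall's theorem the bases M_i and O_S of M/S admit an
   injection h : M_i -> O_S such that S + (O_S - h u) + u is independent for every u in M_i.
   Optimality of O_(S+u) and submodularity then give
     f(O_(S+u) + S + u) >= f(A - h u + u) >= f(A) + [f(A + u) - f(A)] - [f(A) - f(A - h u)].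
   Summed over u, submodularity bounds the total gain below by f(A + M_i) - f(A) >= -f(A) and
   the total loss above by f(A) - f(S), so the sum is at least (|M_i| - 2) f(A) + f(S).
   As |M_i| = k - |S|, every u in M_i is added with probability exactly 1/k, which turns this
   into the claimed inequality conditionally on S_(i-1); taking expectations concludes. *)

definition hall_condition :: "'a set \<Rightarrow> ('a \<Rightarrow> 'b set) \<Rightarrow> bool" where
  "hall_condition X G \<longleftrightarrow> (\<forall>Y\<subseteq>X. card Y \<le> card (\<Union>(G ` Y)))"

definition distinct_representatives :: "'a set \<Rightarrow> ('a \<Rightarrow> 'b set) \<Rightarrow> ('a \<Rightarrow> 'b) \<Rightarrow> bool" where
  "distinct_representatives X G h \<longleftrightarrow> inj_on h X \<and> (\<forall>x\<in>X. h x \<in> G x)"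

lemma hall_condition_subset: "hall_condition X G \<Longrightarrow> Y \<subseteq> X \<Longrightarrow> hall_condition Y G"
  unfolding hall_condition_def by blast

lemma hall_condition_singleton:
  assumes "hall_condition X G" "x \<in> X"
  shows "0 < card (G x)"
proof -
  have "card {x} \<le> card (\<Union>(G ` {x}))"
    using assms unfolding hall_condition_def by (meson empty_subsetI insert_subset)
  then show ?thesis by simp
qed

lemma distinct_representatives_glue:
  assumes "Y \<subseteq> X"
    and h1: "distinct_representatives Y (\<lambda>x. G x \<inter> U) h1"
    and h2: "distinct_representatives (X - Y) (\<lambda>x. G x - U) h2"
  shows "distinct_representatives X G (\<lambda>x. if x \<in> Y then h1 x else h2 x)"
proof -
  have sep: "h1 x \<noteq> h2 y" if "x \<in> Y" "y \<in> X - Y" for x y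
    using h1 h2 that unfolding distinct_representatives_def by (metis DiffD2 IntD2)
  then show ?thesis
    using h1 h2 \<open>Y \<subseteq> X\<close> unfolding distinct_representatives_def inj_on_def
    by (auto; metis DiffI)
qed

lemma hall_condition_remove_tight:
  assumes hall: "hall_condition X G" and "finite X" and Y: "Y \<subseteq> X"
    and tight: "card (\<Union>(G ` Y)) = card Y"
  shows "hall_condition (X - Y) (\<lambda>x. G x - \<Union>(G ` Y))"
  unfolding hall_condition_def
proof (intro allI impI)
  fix Z assume Z: "Z \<subseteq> X - Y"
  have fin: "finite Z" "finite Y" using Z Y \<open>finite X\<close> finite_subset by blast+
  have "card Z + card Y = card (Z \<union> Y)"
    using Z fin by (subst card_Un_disjoint) auto
  also have "\<dots> \<le> card (\<Union>(G ` (Z \<union> Y)))"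
    using hall Z Y unfolding hall_condition_def by (metis Diff_subset Un_least order_trans)
  also have "\<Union>(G ` (Z \<union> Y)) = (\<Union>x\<in>Z. G x - \<Union>(G ` Y)) \<union> \<Union>(G ` Y)" by blast
  also have "card \<dots> \<le> card (\<Union>x\<in>Z. G x - \<Union>(G ` Y)) + card Y"
    using card_Un_le tight by metis
  finally show "card Z \<le> card (\<Union>x\<in>Z. G x - \<Union>(G ` Y))" by simp
qed

lemma hall_condition_remove_slack:
  assumes hall: "hall_condition X G" and x: "x \<in> X"
    and slack: "\<And>Y. Y \<subseteq> X \<Longrightarrow> Y \<noteq> {} \<Longrightarrow> Y \<noteq> X \<Longrightarrow> card Y < card (\<Union>(G ` Y))"
  shows "hall_condition (X - {x}) (\<lambda>z. G z - {y})"
  unfolding hall_condition_def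
proof (intro allI impI)
  fix Z assume Z: "Z \<subseteq> X - {x}"
  define W where "W = (\<Union>z\<in>Z. G z - {y})"
  show "card Z \<le> card W"
  proof (cases "Z = {}")
    case False
    have "card Z < card (\<Union>(G ` Z))" using slack[of Z] Z False x by blast
    also have "\<dots> \<le> card ({y} \<union> W)"
    proof (rule card_mono)
      have "finite (\<Union>(G ` Z))" by (rule card_ge_0_finite) (use calculation in linarith)
      then show "finite ({y} \<union> W)" unfolding W_def by (simp add: finite_subset)
    qed (auto simp: W_def)
    also have "\<dots> \<le> card W + 1" using card_Un_le[of "{y}" W] by simp
    finally show ?thesis by simp
  qed (simp add: W_def)
qed

(* Halmos-Vaughan: a tight proper subfamily and its complement are matched separately;
   if there is none, every proper subfamily has slack and x may take any element of G x. *)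
theorem Hall_marriage:
  assumes "finite X" "hall_condition X G"
  shows "\<exists>h. distinct_representatives X G h"
  using assms
proof (induction "card X" arbitrary: X G rule: less_induct)
  case less
  note hyps = less.hyps[rule_format] and fin = less.prems(1) and hall = less.prems(2)
  show ?case
  proof (cases "\<exists>Y. Y \<subseteq> X \<and> Y \<noteq> {} \<and> Y \<noteq> X \<and> card (\<Union>(G ` Y)) = card Y")
    case True
    then obtain Y where Y: "Y \<subseteq> X" "Y \<noteq> {}" "Y \<noteq> X" and tight: "card (\<Union>(G ` Y)) = card Y"
      by blast
    have "finite Y" using Y(1) fin by (rule finite_subset)
    have "card Y < card X" using Y fin by (meson psubsetI psubset_card_mono)
    then obtain h1 where "distinct_representatives Y G h1"
      using hyps \<open>finite Y\<close> hall_condition_subset[OF hall Y(1)] by blast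
    then have h1: "distinct_representatives Y (\<lambda>x. G x \<inter> \<Union>(G ` Y)) h1"
      unfolding distinct_representatives_def by blast
    have "0 < card Y" using \<open>finite Y\<close> Y(2) by (simp add: card_gt_0_iff)
    then have "card (X - Y) < card X"
      using Y(1) \<open>finite Y\<close> \<open>card Y < card X\<close> by (simp add: card_Diff_subset)
    then obtain h2 where "distinct_representatives (X - Y) (\<lambda>x. G x - \<Union>(G ` Y)) h2"
      using hyps fin hall_condition_remove_tight[OF hall fin Y(1) tight] by blast
    with h1 show ?thesis using distinct_representatives_glue[OF Y(1)] by blast
  next
    case False
    show ?thesis
    proof (cases "X = {}")
      case True
      then show ?thesis unfolding distinct_representatives_def by simp
    next
      case False
      then obtain x where x: "x \<in> X" by blast
      have slack: "card Y < card (\<Union>(G ` Y))" if "Y \<subseteq> X" "Y \<noteq> {}" "Y \<noteq> X" for Y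
        using \<open>\<nexists>Y. _\<close> hall that unfolding hall_condition_def by (metis le_neq_implies_less)
      obtain y where y: "y \<in> G x"
        using hall_condition_singleton[OF hall x] by (metis card.empty ex_in_conv less_irrefl)
      have h1: "distinct_representatives {x} (\<lambda>z. G z \<inter> {y}) (\<lambda>_. y)"
        using y unfolding distinct_representatives_def by simp
      have "card (X - {x}) < card X" using fin x by (rule card_Diff1_less)
      then obtain h2 where "distinct_representatives (X - {x}) (\<lambda>z. G z - {y}) h2"
        using hyps fin hall_condition_remove_slack[OF hall x slack] by blast
      with h1 show ?thesis using distinct_representatives_glue[of "{x}" X] x by blast
    qed
  qed
qed

locale finite_matroid =
  fixes N :: "'a set" and indep :: "'a set \<Rightarrow> bool"
  assumes matroid: "matroid N indep"
begin

lemma finite_ground: "finite N"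
  using matroid unfolding matroid_def by blast

lemma indep_empty: "indep {}"
  using matroid unfolding matroid_def by blast

lemma indep_subset_ground: "indep A \<Longrightarrow> A \<subseteq> N"
  using matroid unfolding matroid_def by blast

lemma indep_finite: "indep A \<Longrightarrow> finite A"
  using finite_ground indep_subset_ground finite_subset by blast

lemma indep_subset: "indep B \<Longrightarrow> A \<subseteq> B \<Longrightarrow> indep A"
  using matroid unfolding matroid_def by blast

lemma indep_augment:
  "indep A \<Longrightarrow> indep B \<Longrightarrow> card A < card B \<Longrightarrow> \<exists>x\<in>B - A. indep (insert x A)"
  using matroid unfolding matroid_def by blast

lemma indep_extend:
  assumes "indep K" "indep B"
  shows "\<exists>K'. K \<subseteq> K' \<and> K' \<subseteq> K \<union> B \<and> indep K' \<and> card B \<le> card K'"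
  using assms(1)
proof (induction "card B - card K" arbitrary: K rule: less_induct)
  case less
  show ?case
  proof (cases "card B \<le> card K")
    case False
    then obtain x where x: "x \<in> B - K" "indep (insert x K)"
      using indep_augment[OF less.prems \<open>indep B\<close>] by auto
    then have "card B - card (insert x K) < card B - card K"
      using False indep_finite[OF less.prems] by simp
    from less.hyps[OF this x(2)] show ?thesis using x by blast
  qed (use less.prems in blast)
qed

lemma finite_card_indep: "finite (card ` {A. indep A})"
  using finite_ground indep_subset_ground
  by (metis (no_types, lifting) Pow_iff finite_Pow_iff finite_imageI finite_subset mem_Collect_eq subsetI)

lemma card_indep_le_rank: "indep A \<Longrightarrow> card A \<le> matroid_rank indep"
  unfolding matroid_rank_def using finite_card_indep by simp

lemma ex_indep_card_rank: "\<exists>A. indep A \<and> card A = matroid_rank indep"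
proof -
  have "card ` {A. indep A} \<noteq> {}" using indep_empty by blast
  from Max_in[OF finite_card_indep this] show ?thesis unfolding matroid_rank_def by auto
qed

abbreviation contract_base :: "'a set \<Rightarrow> 'a set \<Rightarrow> bool" where
  "contract_base S B \<equiv> is_base (contract_indep N indep S) B"

lemma contract_base_subset: "contract_base S B \<Longrightarrow> B \<subseteq> N - S"
  and contract_base_indep: "contract_base S B \<Longrightarrow> indep (B \<union> S)"
  and contract_base_maximal:
    "contract_base S B \<Longrightarrow> A \<subseteq> N - S \<Longrightarrow> indep (A \<union> S) \<Longrightarrow> B \<subseteq> A \<Longrightarrow> A = B"
  unfolding is_base_def contract_indep_def by blast+

lemma contract_base_finite: "contract_base S B \<Longrightarrow> finite B"
  and contract_base_finite_contracted: "contract_base S B \<Longrightarrow> finite S"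
  using contract_base_indep indep_finite by blast+

lemma card_contract_base:
  assumes B: "contract_base S B"
  shows "card B + card S = matroid_rank indep"
proof -
  have card_Un: "card (B \<union> S) = card B + card S"
    using contract_base_subset[OF B] contract_base_finite[OF B] contract_base_finite_contracted[OF B]
    by (subst card_Un_disjoint) auto
  have "\<not> card (B \<union> S) < matroid_rank indep"
  proof
    assume "card (B \<union> S) < matroid_rank indep"
    moreover obtain A where "indep A" "card A = matroid_rank indep" using ex_indep_card_rank by blast
    ultimately obtain x where x: "x \<in> A - (B \<union> S)" "indep (insert x (B \<union> S))"
      using indep_augment contract_base_indep[OF B] by metis
    then have xB: "insert x B \<subseteq> N - S"
      using contract_base_subset[OF B] indep_subset_ground[OF \<open>indep A\<close>] by auto
    then have "insert x B = B" using contract_base_maximal[OF B xB] x(2) by auto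
    then show False using x(1) by blast
  qed
  then show ?thesis using card_indep_le_rank[OF contract_base_indep[OF B]] card_Un by linarith
qed

lemma contract_base_exchange:
  assumes B: "contract_base S B" and I: "I \<subseteq> B" and y: "y \<in> N - S" "y \<notin> I"
    and indep_y: "indep (insert y (S \<union> I))"
  shows "\<exists>e\<in>B - I. indep (insert y (S \<union> (B - {e})))"
proof (cases "y \<in> B")
  case True
  then have "insert y (S \<union> (B - {y})) = B \<union> S" by blast
  then show ?thesis using True y(2) contract_base_indep[OF B] by (metis DiffI)
next
  case False
  \<comment> \<open>Extend S + I + y to full rank inside B + S + y; exactly one e in B - I is left out.\<close>
  obtain K where K: "insert y (S \<union> I) \<subseteq> K" "K \<subseteq> insert y (S \<union> I) \<union> (B \<union> S)"
    "indep K" "card (B \<union> S) \<le> card K"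
    using indep_extend[OF indep_y contract_base_indep[OF B]] by blast
  have "\<not> indep (insert y B \<union> S)"
  proof
    assume "indep (insert y B \<union> S)"
    moreover have "insert y B \<subseteq> N - S" using contract_base_subset[OF B] y(1) by blast
    ultimately show False using contract_base_maximal[OF B] False by blast
  qed
  then have "K \<noteq> insert y B \<union> S" using K(3) by blast
  moreover have "K \<subseteq> insert y B \<union> S" using K(2) I by blast
  ultimately obtain e where e: "e \<in> insert y B \<union> S" "e \<notin> K" by blast
  then have "e \<in> B - I" using K(1) by blast
  define W where "W = insert y (S \<union> (B - {e}))"
  have "finite W" "K \<subseteq> W"
    using contract_base_finite[OF B] contract_base_finite_contracted[OF B] e K(2) I
    unfolding W_def by auto
  have "W = insert y ((B \<union> S) - {e})"
    using \<open>e \<in> B - I\<close> contract_base_subset[OF B] unfolding W_def by blast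
  then have "card W = card (B \<union> S)"
    using \<open>e \<in> B - I\<close> False y(1) \<open>finite W\<close> card_Suc_Diff1[of "B \<union> S" e]
    by (simp add: card_insert_if)
  then have "K = W" using card_seteq[OF \<open>finite W\<close> \<open>K \<subseteq> W\<close>] K(4) by simp
  then show ?thesis using K(3) \<open>e \<in> B - I\<close> unfolding W_def by blast
qed

lemma hall_condition_exchange:
  assumes B: "contract_base S B" and B': "contract_base S B'"
  shows "hall_condition B' (\<lambda>u. {e\<in>B. indep (insert u (S \<union> (B - {e})))})"
  unfolding hall_condition_def
proof (intro allI impI)
  fix Y assume Y: "Y \<subseteq> B'"
  define I where "I = (\<Union>u\<in>Y. {e\<in>B. indep (insert u (S \<union> (B - {e})))})"
  show "card Y \<le> card I"
  proof (rule ccontr)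
    assume "\<not> card Y \<le> card I"
    have "I \<subseteq> B" unfolding I_def by blast
    have fin: "finite S" "finite I" "finite Y"
      using contract_base_finite_contracted[OF B] contract_base_finite[OF B] \<open>I \<subseteq> B\<close>
        contract_base_finite[OF B'] Y finite_subset by blast+
    have "card (S \<union> I) = card S + card I" "card (S \<union> Y) = card S + card Y"
      using fin \<open>I \<subseteq> B\<close> Y contract_base_subset[OF B] contract_base_subset[OF B']
      by (subst card_Un_disjoint; fastforce)+
    then have "card (S \<union> I) < card (S \<union> Y)" using \<open>\<not> card Y \<le> card I\<close> by simp
    moreover have "indep (S \<union> I)" "indep (S \<union> Y)"
      using indep_subset contract_base_indep[OF B] contract_base_indep[OF B'] \<open>I \<subseteq> B\<close> Y
      by (metis Un_commute Un_mono order_refl)+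
    ultimately obtain y where y: "y \<in> (S \<union> Y) - (S \<union> I)" "indep (insert y (S \<union> I))"
      using indep_augment by blast
    have "y \<in> Y" "y \<in> N - S" "y \<notin> I"
      using y(1) Y contract_base_subset[OF B'] by blast+
    from contract_base_exchange[OF B \<open>I \<subseteq> B\<close> \<open>y \<in> N - S\<close> \<open>y \<notin> I\<close> y(2)]
    obtain e where "e \<in> B - I" "indep (insert y (S \<union> (B - {e})))" by blast
    then show False using \<open>y \<in> Y\<close> unfolding I_def by blast
  qed
qed

lemma contract_base_exchange_injection:
  assumes "contract_base S B" "contract_base S B'"
  shows "\<exists>h. inj_on h B' \<and> (\<forall>u\<in>B'. h u \<in> B \<and> indep (insert u (S \<union> (B - {h u}))))"
  using Hall_marriage[OF contract_base_finite[OF assms(2)] hall_condition_exchange[OF assms]]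
  unfolding distinct_representatives_def by auto

end

lemma submodular_onD:
  "submodular_on N f \<Longrightarrow> A \<subseteq> N \<Longrightarrow> B \<subseteq> N \<Longrightarrow> f (A \<union> B) + f (A \<inter> B) \<le> f A + f B"
  unfolding submodular_on_def by blast

lemma submodular_on_union_le_sum_marginals:
  assumes sub: "submodular_on N f" and "finite B" "A \<subseteq> N" "B \<subseteq> N"
  shows "f (A \<union> B) - f A \<le> (\<Sum>u\<in>B. f (insert u A) - f A)"
  using \<open>finite B\<close> \<open>B \<subseteq> N\<close>
proof (induction B rule: finite_induct)
  case (insert x F)
  have "f ((A \<union> F) \<union> insert x A) + f ((A \<union> F) \<inter> insert x A) \<le> f (A \<union> F) + f (insert x A)"
    by (rule submodular_onD[OF sub]) (use \<open>A \<subseteq> N\<close> insert.prems in auto)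
  moreover have "(A \<union> F) \<union> insert x A = A \<union> insert x F" "(A \<union> F) \<inter> insert x A = A"
    using insert.hyps(2) by auto
  ultimately show ?case using insert by simp
qed simp

lemma submodular_on_sum_removals_le:
  assumes sub: "submodular_on N f" and "finite B" "B \<subseteq> A" "A \<subseteq> N"
  shows "(\<Sum>e\<in>B. f A - f (A - {e})) \<le> f A - f (A - B)"
  using \<open>finite B\<close> \<open>B \<subseteq> A\<close>
proof (induction B rule: finite_induct)
  case (insert x F)
  have "f ((A - F) \<union> (A - {x})) + f ((A - F) \<inter> (A - {x})) \<le> f (A - F) + f (A - {x})"
    by (rule submodular_onD[OF sub]) (use \<open>A \<subseteq> N\<close> in auto)
  moreover have "(A - F) \<union> (A - {x}) = A" "(A - F) \<inter> (A - {x}) = A - insert x F"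
    using insert.hyps(2) insert.prems by auto
  ultimately show ?case using insert by simp
qed simp

lemma submodular_on_swap:
  assumes "submodular_on N f" "A \<subseteq> N" "u \<in> N" "u \<noteq> e"
  shows "f (insert u A) + f (A - {e}) \<le> f (insert u (A - {e})) + f A"
proof -
  have "insert u (A - {e}) \<union> A = insert u A" "insert u (A - {e}) \<inter> A = A - {e}"
    using \<open>u \<noteq> e\<close> by auto
  then show ?thesis using submodular_onD[OF assms(1), of "insert u (A - {e})" A] assms(2,3) by auto
qed

locale submodular_matroid = finite_matroid +
  fixes f :: "'a set \<Rightarrow> real" and Opt :: "'a set \<Rightarrow> 'a set"
  assumes f_nonneg: "A \<subseteq> N \<Longrightarrow> 0 \<le> f A"
    and f_submodular: "submodular_on N f"
    and Opt_base: "indep S \<Longrightarrow> contract_base S (Opt S)"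
    and Opt_optimal: "indep S \<Longrightarrow> contract_indep N indep S A \<Longrightarrow> f (S \<union> A) \<le> f (S \<union> Opt S)"
begin

lemma f_le_f_Opt:
  assumes S: "indep S" and A: "A \<subseteq> Opt S"
  shows "f (S \<union> A) \<le> f (S \<union> Opt S)"
proof (rule Opt_optimal[OF S])
  have B: "contract_base S (Opt S)" using Opt_base[OF S] .
  have "indep (A \<union> S)" by (rule indep_subset[OF contract_base_indep[OF B]]) (use A in blast)
  then show "contract_indep N indep S A"
    unfolding contract_indep_def using contract_base_subset[OF B] A by blast
qed

lemma f_Opt_insert_ge_exchange:
  assumes S: "indep S" and u: "u \<in> N - S" and e: "e \<in> Opt S"
    and indep_swap: "indep (insert u (S \<union> (Opt S - {e})))"
  defines "A \<equiv> S \<union> Opt S"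
  shows "f (insert u A) + f (A - {e}) - f A \<le> f (Opt (insert u S) \<union> insert u S)"
proof -
  have B: "contract_base S (Opt S)" using Opt_base[OF S] .
  have e_notin: "e \<notin> S" using contract_base_subset[OF B] e by blast
  have "A \<subseteq> N" unfolding A_def using contract_base_subset[OF B] indep_subset_ground[OF S] by blast
  have "f (insert u A) + f (A - {e}) \<le> f (insert u (A - {e})) + f A"
  proof (cases "u = e")
    case True
    have "A - {e} = S \<union> (Opt S - {e})" unfolding A_def using e_notin by blast
    then have "f (A - {e}) \<le> f A" unfolding A_def using f_le_f_Opt[OF S, of "Opt S - {e}"] by simp
    moreover have "insert u (A - {e}) = insert u A" using True by simp
    ultimately show ?thesis by simp
  next
    case False
    show ?thesis using submodular_on_swap[OF f_submodular \<open>A \<subseteq> N\<close> _ False] u by simp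
  qed
  moreover have "f (insert u (A - {e})) \<le> f (Opt (insert u S) \<union> insert u S)"
  proof -
    have swap_eq: "(Opt S - {e} - {u}) \<union> insert u S = insert u (S \<union> (Opt S - {e}))" by blast
    have "indep (insert u S)" by (rule indep_subset[OF indep_swap]) blast
    moreover have "contract_indep N indep (insert u S) (Opt S - {e} - {u})"
      unfolding contract_indep_def swap_eq using indep_swap contract_base_subset[OF B] by blast
    ultimately have "f (insert u S \<union> (Opt S - {e} - {u})) \<le> f (insert u S \<union> Opt (insert u S))"
      by (rule Opt_optimal)
    moreover have "insert u S \<union> (Opt S - {e} - {u}) = insert u (A - {e})"
      unfolding A_def using e_notin by blast
    ultimately show ?thesis by (simp add: Un_commute)
  qed
  ultimately show ?thesis by linarith
qed

lemma sum_f_Opt_insert_ge: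
  assumes S: "indep S" and B: "contract_base S B"
  shows "(real (card B) - 2) * f (S \<union> Opt S) + f S \<le> (\<Sum>u\<in>B. f (Opt (insert u S) \<union> insert u S))"
proof -
  define A where "A = S \<union> Opt S"
  have O: "contract_base S (Opt S)" using Opt_base[OF S] .
  obtain h where h: "inj_on h B" "\<And>u. u \<in> B \<Longrightarrow> h u \<in> Opt S"
    "\<And>u. u \<in> B \<Longrightarrow> indep (insert u (S \<union> (Opt S - {h u})))"
    using contract_base_exchange_injection[OF O B] by blast
  have "A \<subseteq> N" unfolding A_def using contract_base_subset[OF O] indep_subset_ground[OF S] by blast
  have gains: "- f A \<le> (\<Sum>u\<in>B. f (insert u A) - f A)"
  proof -
    have "f (A \<union> B) - f A \<le> (\<Sum>u\<in>B. f (insert u A) - f A)"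
      using submodular_on_union_le_sum_marginals[OF f_submodular contract_base_finite[OF B]]
        \<open>A \<subseteq> N\<close> contract_base_subset[OF B] by blast
    moreover have "0 \<le> f (A \<union> B)" using f_nonneg \<open>A \<subseteq> N\<close> contract_base_subset[OF B] by blast
    ultimately show ?thesis by linarith
  qed
  have losses: "(\<Sum>u\<in>B. f A - f (A - {h u})) \<le> f A - f S"
  proof -
    have "(\<Sum>u\<in>B. f A - f (A - {h u})) = (\<Sum>e\<in>h ` B. f A - f (A - {e}))"
      by (simp add: sum.reindex[OF h(1)])
    also have "\<dots> \<le> (\<Sum>e\<in>Opt S. f A - f (A - {e}))"
    proof (rule sum_mono2)
      fix e assume "e \<in> Opt S - h ` B"
      then have "A - {e} = S \<union> (Opt S - {e})" unfolding A_def using contract_base_subset[OF O] by blast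
      then show "0 \<le> f A - f (A - {e})" unfolding A_def using f_le_f_Opt[OF S, of "Opt S - {e}"] by simp
    qed (use contract_base_finite[OF O] h(2) in auto)
    also have "\<dots> \<le> f A - f (A - Opt S)"
      by (rule submodular_on_sum_removals_le[OF f_submodular contract_base_finite[OF O] _ \<open>A \<subseteq> N\<close>])
        (simp add: A_def)
    also have "A - Opt S = S" unfolding A_def using contract_base_subset[OF O] by blast
    finally show ?thesis .
  qed
  have "(\<Sum>u\<in>B. f (insert u A) + f (A - {h u}) - f A) \<le> (\<Sum>u\<in>B. f (Opt (insert u S) \<union> insert u S))"
  proof (rule sum_mono)
    fix u assume "u \<in> B"
    then show "f (insert u A) + f (A - {h u}) - f A \<le> f (Opt (insert u S) \<union> insert u S)"
      unfolding A_def using f_Opt_insert_ge_exchange[OF S _ h(2,3)] contract_base_subset[OF B] by blast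
  qed
  moreover have "(\<Sum>u\<in>B. f (insert u A) + f (A - {h u}) - f A)
      = real (card B) * f A + (\<Sum>u\<in>B. f (insert u A) - f A) - (\<Sum>u\<in>B. f A - f (A - {h u}))"
    by (simp add: sum.distrib sum_subtractf algebra_simps)
  ultimately show ?thesis using gains losses unfolding A_def by (simp add: algebra_simps)
qed

end

lemma srrg_step_saturated:
  assumes "card S = k" "0 < k"
  shows "srrg_step k Mc j S = return_pmf S"
proof -
  have "bernoulli_pmf (1 - real (card S) / real k) = return_pmf False"
    using assms by (intro pmf_eqI) (auto split: split_indicator)
  then show ?thesis unfolding srrg_step_def by (simp add: bind_return_pmf)
qed

lemma set_pmf_srrg_step:
  assumes "finite (Mc j S)" "card (Mc j S) + card S = k" "0 < k"
  shows "set_pmf (srrg_step k Mc j S) \<subseteq> insert S ((\<lambda>u. insert u S) ` Mc j S)"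
proof (cases "Mc j S = {}")
  case True
  then have "srrg_step k Mc j S = return_pmf S"
    using assms by (intro srrg_step_saturated) simp_all
  then show ?thesis by simp
next
  case False
  show ?thesis
  proof
    fix T assume "T \<in> set_pmf (srrg_step k Mc j S)"
    then obtain b where
      "T \<in> set_pmf (if b then map_pmf (\<lambda>u. insert u S) (pmf_of_set (Mc j S)) else return_pmf S)"
      unfolding srrg_step_def by auto
    then show "T \<in> insert S ((\<lambda>u. insert u S) ` Mc j S)"
      by (cases b) (simp_all add: set_pmf_of_set[OF False assms(1)])
  qed
qed

lemma srrg_step_expectation:
  fixes h :: "'a set \<Rightarrow> real"
  assumes fin: "finite (Mc j S)" and card: "card (Mc j S) + card S = k" and "0 < k"
  shows "measure_pmf.expectation (srrg_step k Mc j S) h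
    = ((\<Sum>u\<in>Mc j S. h (insert u S)) + real (card S) * h S) / real k"
proof (cases "Mc j S = {}")
  \<comment> \<open>Then the coin never comes up heads, so the unspecified pmf_of_set {} is never sampled.\<close>
  case True
  then have "srrg_step k Mc j S = return_pmf S"
    using card \<open>0 < k\<close> by (intro srrg_step_saturated) simp_all
  then show ?thesis using True card \<open>0 < k\<close> by simp
next
  case False
  define p where "p = 1 - real (card S) / real k"
  have p: "p = real (card (Mc j S)) / real k" using card \<open>0 < k\<close> by (simp add: p_def field_simps)
  have "0 \<le> p" "p \<le> 1" using card \<open>0 < k\<close> unfolding p by (simp_all add: divide_le_eq_1)
  have "measure_pmf.expectation (srrg_step k Mc j S) h =
     (\<Sum>b\<in>UNIV. pmf (bernoulli_pmf p) b *\<^sub>R measure_pmf.expectation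
        (if b then map_pmf (\<lambda>u. insert u S) (pmf_of_set (Mc j S)) else return_pmf S) h)"
    unfolding srrg_step_def p_def[symmetric]
    by (rule pmf_expectation_bind) (use fin False in auto)
  also have "\<dots> = p * ((\<Sum>u\<in>Mc j S. h (insert u S)) / real (card (Mc j S))) + (1 - p) * h S"
    using \<open>0 \<le> p\<close> \<open>p \<le> 1\<close> integral_pmf_of_set[OF False fin] by (simp add: UNIV_bool)
  also have "p * ((\<Sum>u\<in>Mc j S. h (insert u S)) / real (card (Mc j S)))
      = (\<Sum>u\<in>Mc j S. h (insert u S)) / real k"
    using False fin unfolding p by simp
  also have "1 - p = real (card S) / real k" unfolding p_def by simp
  finally show ?thesis by (simp add: add_divide_distrib)
qed

lemma expectation_bind_pmf_ge:
  fixes D :: "'a pmf" and K :: "'a \<Rightarrow> 'b pmf" and \<phi> :: "'a \<Rightarrow> real" and g :: "'b \<Rightarrow> real"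
  assumes "finite (set_pmf D)" "\<And>a. a \<in> set_pmf D \<Longrightarrow> finite (set_pmf (K a))"
    and "\<And>a. a \<in> set_pmf D \<Longrightarrow> \<phi> a \<le> measure_pmf.expectation (K a) g"
  shows "measure_pmf.expectation D \<phi> \<le> measure_pmf.expectation (bind_pmf D K) g"
proof -
  have "measure_pmf.expectation D \<phi> = (\<Sum>a\<in>set_pmf D. pmf D a * \<phi> a)"
    using assms(1) by (subst integral_measure_pmf_real) (auto simp: mult.commute)
  also have "\<dots> \<le> (\<Sum>a\<in>set_pmf D. pmf D a * measure_pmf.expectation (K a) g)"
    using assms(3) by (intro sum_mono mult_left_mono) simp_all
  also have "\<dots> = measure_pmf.expectation (bind_pmf D K) g"
    using assms(1,2) by (subst pmf_expectation_bind[of "set_pmf D"]) auto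
  finally show ?thesis .
qed

locale smooth_residual_random_greedy = submodular_matroid +
  fixes k :: nat and Mc :: "nat \<Rightarrow> 'a set \<Rightarrow> 'a set"
  assumes rank: "k = matroid_rank indep" and k_pos: "0 < k"
    and Mc_base: "indep S \<Longrightarrow> contract_base S (Mc j S)"
begin

lemma card_Mc: "indep S \<Longrightarrow> card (Mc j S) + card S = k"
  using card_contract_base[OF Mc_base] rank by simp

lemma finite_Mc: "indep S \<Longrightarrow> finite (Mc j S)"
  using contract_base_finite[OF Mc_base] .

lemma set_pmf_srrg_step_indep:
  assumes S: "indep S" and T: "T \<in> set_pmf (srrg_step k Mc j S)"
  shows "indep T"
proof -
  have "T \<subseteq> Mc j S \<union> S"
    using set_pmf_srrg_step[where Mc = Mc, OF finite_Mc[OF S, of j] card_Mc[OF S, of j] k_pos] T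
    by blast
  then show ?thesis using indep_subset contract_base_indep[OF Mc_base[OF S, of j]] by blast
qed

lemma srrg_dist_indep: "S \<in> set_pmf (srrg_dist k Mc n) \<Longrightarrow> indep S"
  by (induction n arbitrary: S) (auto simp: indep_empty intro: set_pmf_srrg_step_indep)

lemma finite_set_pmf_srrg_dist: "finite (set_pmf (srrg_dist k Mc n))"
  using srrg_dist_indep indep_subset_ground finite_ground
  by (meson PowI finite_Pow_iff finite_subset subsetI)

lemma finite_set_pmf_srrg_step:
  assumes S: "indep S"
  shows "finite (set_pmf (srrg_step k Mc j S))"
  by (rule finite_subset[OF set_pmf_srrg_step[where Mc = Mc, OF finite_Mc[OF S] card_Mc[OF S] k_pos]])
    (simp add: finite_Mc[OF S])

lemma srrg_step_expectation_ge:
  assumes S: "indep S"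
  shows "(1 - 2 / real k) * f (Opt S \<union> S) + (1 / real k) * f S
    \<le> measure_pmf.expectation (srrg_step k Mc j S) (\<lambda>T. f (Opt T \<union> T))"
proof -
  have k: "real k = real (card (Mc j S)) + real (card S)" using card_Mc[OF S, of j] by linarith
  have "(real (card (Mc j S)) - 2) * f (S \<union> Opt S) + f S
      \<le> (\<Sum>u\<in>Mc j S. f (Opt (insert u S) \<union> insert u S))"
    by (rule sum_f_Opt_insert_ge[OF S Mc_base[OF S, of j]])
  then have "(real k - 2) * f (Opt S \<union> S) + f S
      \<le> (\<Sum>u\<in>Mc j S. f (Opt (insert u S) \<union> insert u S)) + real (card S) * f (Opt S \<union> S)"
    unfolding k by (simp add: Un_commute algebra_simps)
  then have "((real k - 2) * f (Opt S \<union> S) + f S) / real k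
      \<le> measure_pmf.expectation (srrg_step k Mc j S) (\<lambda>T. f (Opt T \<union> T))"
    using k_pos srrg_step_expectation[where Mc = Mc, OF finite_Mc[OF S, of j] card_Mc[OF S, of j]]
    by (simp add: divide_right_mono)
  then show ?thesis using k_pos by (simp add: field_simps)
qed

end

theorem lemma13:
  fixes N :: "'a set" and indep :: "'a set \<Rightarrow> bool" and f :: "'a set \<Rightarrow> real"
    and k T i :: nat and Opt :: "'a set \<Rightarrow> 'a set" and Mc :: "nat \<Rightarrow> 'a set \<Rightarrow> 'a set"
  assumes M: "matroid N indep"
    and rank: "k = matroid_rank indep" and kpos: "k > 0"
    and f_nonneg: "\<forall>A. A \<subseteq> N \<longrightarrow> f A \<ge> 0"
    and f_sub: "submodular_on N f"
    and Opt_def: "\<forall>S. indep S \<longrightarrow>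
        is_base (contract_indep N indep S) (Opt S) \<and>
        (\<forall>A. contract_indep N indep S A \<longrightarrow> f (S \<union> A) \<le> f (S \<union> Opt S))"
    and Mc_def: "\<forall>j S. indep S \<longrightarrow>
        is_base (contract_indep N indep S) (Mc j S) \<and>
        (\<forall>B. is_base (contract_indep N indep S) B \<longrightarrow>
           (\<Sum>u\<in>B. f (S \<union> {u}) - f S) \<le> (\<Sum>u\<in>Mc j S. f (S \<union> {u}) - f S))"
    and i: "1 \<le> i" "i \<le> T"
  shows "measure_pmf.expectation (srrg_dist k Mc i) (\<lambda>S. f (Opt S \<union> S))
      \<ge> (1 - 2 / real k) * measure_pmf.expectation (srrg_dist k Mc (i - 1)) (\<lambda>S. f (Opt S \<union> S))
        + (1 / real k) * measure_pmf.expectation (srrg_dist k Mc (i - 1)) f"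
proof -
  \<comment> \<open>Only that M_i is some base of M/S_(i-1) matters here, not its maximality.\<close>
  interpret smooth_residual_random_greedy N indep f Opt k Mc
    using M rank kpos f_nonneg f_sub Opt_def Mc_def by unfold_locales auto
  obtain j where i_eq: "i = Suc j" using i(1) by (cases i) auto
  let ?D = "srrg_dist k Mc j" and ?g = "\<lambda>S. f (Opt S \<union> S)"
  have "(1 - 2 / real k) * measure_pmf.expectation ?D ?g + (1 / real k) * measure_pmf.expectation ?D f
      = measure_pmf.expectation ?D (\<lambda>S. (1 - 2 / real k) * ?g S + (1 / real k) * f S)"
    by (subst Bochner_Integration.integral_add)
      (simp_all add: integrable_measure_pmf_finite[OF finite_set_pmf_srrg_dist])
  also have "\<dots> \<le> measure_pmf.expectation (bind_pmf ?D (srrg_step k Mc i)) ?g"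
    using finite_set_pmf_srrg_dist finite_set_pmf_srrg_step srrg_step_expectation_ge srrg_dist_indep
    by (intro expectation_bind_pmf_ge) auto
  finally show ?thesis unfolding i_eq by simp
qed

end
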